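(* Let $a=(a_1,\dots,a_m)$ and $a'$ be two compositions such that the multisets $M(a)=\{a_1,\dots,a_m\}$ and $M(a')$ are equal (i.e. $a'$ is a rearrangement of $a$). Then for every $n\ge 0$, the number of compositions of size $n$ that dominate $a$ equals the number of compositions of size $n$ that dominate $a'$.
   Context: A composition is a finite sequence of positive integers; its size is the sum of its components and its length is the number of components. A composition $b=(b_1,\dots,b_k)$ dominates $a=(a_1,\dots,a_m)$ if there are indices $1\le i(1)<i(2)<\dots<i(m)\le k$ with $a_j\le b_{i(j)}$ for every $j\in[m]$. *)

theory Defs
  imports "HOL-Library.Multiset"
begin

definition is_composition :: "nat list \<Rightarrow> bool" where
  "is_composition c \<longleftrightarrow> (\<forall>x\<in>set c. 0 < x)"

definition comp_size :: "nat list \<Rightarrow> nat" where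
  "comp_size c = sum_list c"

definition dominates :: "nat list \<Rightarrow> nat list \<Rightarrow> bool" where
  "dominates b a \<longleftrightarrow>
     (\<exists>i :: nat \<Rightarrow> nat. strict_mono_on {..<length a} i \<and>
        (\<forall>j<length a. i j < length b \<and> a ! j \<le> b ! (i j)))"

definition dominating_compositions :: "nat \<Rightarrow> nat list \<Rightarrow> nat list set" where
  "dominating_compositions n a =
     {b. is_composition b \<and> comp_size b = n \<and> dominates b a}"

end

theory Submission
  imports Defs "HOL-Library.Sublist"
begin

text \<open>Domination is the subsequence embedding \<open>list_emb (\<le>)\<close>. Embedding greedily, \<open>b\<close>
  dominates \<open>x # r\<close> iff \<open>b\<close> splits, uniquely, as \<open>e @ s\<close> where \<open>e\<close> is the shortest prefix of
  \<open>b\<close> ending in an entry \<open>\<ge> x\<close> and \<open>s\<close> dominates \<open>r\<close>. So the number of compositions of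
  size \<open>n\<close> dominating \<open>x # y # r\<close> is a sum over pairs of such prefixes \<open>(e, f)\<close> of a term
  depending only on their sizes, and swapping the pair matches the sums for \<open>x # y # r\<close> and
  \<open>y # x # r\<close>. As the counts for \<open>x # r\<close> are determined by those for \<open>r\<close>, every adjacent
  transposition, hence every rearrangement, preserves the counts.\<close>

lemma list_emb_imp_dominates: "list_emb (\<le>) a b \<Longrightarrow> dominates b a"
proof (induction rule: list_emb.induct)
  case (list_emb_Nil b)
  show ?case by (simp add: dominates_def strict_mono_on_def)
next
  case (list_emb_Cons a b y)
  then obtain i where "strict_mono_on {..<length a} i"
    and "\<forall>j<length a. i j < length b \<and> a ! j \<le> b ! i j"
    by (auto simp: dominates_def)
  then show ?case
    unfolding dominates_def
    by (intro exI[of _ "Suc \<circ> i"]) (auto simp: strict_mono_on_def)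
next
  case (list_emb_Cons2 x y a b)
  then obtain i where "strict_mono_on {..<length a} i"
    and "\<forall>j<length a. i j < length b \<and> a ! j \<le> b ! i j"
    by (auto simp: dominates_def)
  with \<open>x \<le> y\<close> show ?case
    unfolding dominates_def
    by (intro exI[of _ "\<lambda>j. case j of 0 \<Rightarrow> 0 | Suc j \<Rightarrow> Suc (i j)"])
      (auto simp: strict_mono_on_def nth_Cons split: nat.split)
qed

lemma dominates_imp_list_emb: "dominates b a \<Longrightarrow> list_emb (\<le>) a b"
proof (induction a arbitrary: b)
  case Nil
  show ?case by simp
next
  case (Cons x a)
  then obtain i where mono: "strict_mono_on {..<Suc (length a)} i"
    and dom: "\<forall>j<Suc (length a). i j < length b \<and> (x # a) ! j \<le> b ! i j"
    by (auto simp: dominates_def)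
  define k where "k = i 0"
  have "k < length b" and "x \<le> b ! k"
    using dom by (auto simp: k_def)
  have after_k: "k < i (Suc j)" if "j < length a" for j
    using mono that by (auto simp: k_def strict_mono_on_def)
  have "dominates (drop (Suc k) b) a"
    unfolding dominates_def
  proof (intro exI conjI allI impI)
    show "strict_mono_on {..<length a} (\<lambda>j. i (Suc j) - Suc k)"
    proof (rule strict_mono_onI)
      fix r s assume "r \<in> {..<length a}" "s \<in> {..<length a}" "r < s"
      then have "i (Suc r) < i (Suc s)" and "k < i (Suc r)"
        using mono after_k by (auto simp: strict_mono_on_def)
      then show "i (Suc r) - Suc k < i (Suc s) - Suc k"
        by simp
    qed
  next
    fix j assume "j < length a"
    then show "i (Suc j) - Suc k < length (drop (Suc k) b)"
      and "a ! j \<le> drop (Suc k) b ! (i (Suc j) - Suc k)"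
      using dom after_k[of j] by auto
  qed
  then have "list_emb (\<le>) (x # a) (b ! k # drop (Suc k) b)"
    using Cons.IH \<open>x \<le> b ! k\<close> by simp
  then have "list_emb (\<le>) (x # a) (take k b @ b ! k # drop (Suc k) b)"
    by blast
  then show ?case
    using \<open>k < length b\<close> by (simp add: id_take_nth_drop[symmetric])
qed

definition leftmost_block :: "'a::linorder \<Rightarrow> 'a list \<Rightarrow> bool" where
  "leftmost_block x e \<longleftrightarrow> e \<noteq> [] \<and> x \<le> last e \<and> (\<forall>z\<in>set (butlast e). z < x)"

lemma leftmost_block_append_unique:
  assumes "leftmost_block x e" "leftmost_block x e'" "e @ s = e' @ t"
  shows "e = e'"
proof -
  have no_proper_prefix: "us = []"
    if "leftmost_block x (f @ us)" "leftmost_block x f" for f us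
  proof (rule ccontr)
    assume "us \<noteq> []"
    then have "last f \<in> set (butlast (f @ us))"
      using \<open>leftmost_block x f\<close> by (simp add: leftmost_block_def butlast_append)
    then show False
      using that by (auto simp: leftmost_block_def)
  qed
  from \<open>e @ s = e' @ t\<close> obtain us where "e = e' @ us \<or> e @ us = e'"
    by (auto simp: append_eq_append_conv2)
  then show ?thesis
    using no_proper_prefix assms(1,2) by auto
qed

lemma list_emb_Cons_iff_leftmost_block:
  "list_emb (\<le>) (x # r) b \<longleftrightarrow> (\<exists>e s. b = e @ s \<and> leftmost_block x e \<and> list_emb (\<le>) r s)"
proof
  show "list_emb (\<le>) (x # r) b \<Longrightarrow> \<exists>e s. b = e @ s \<and> leftmost_block x e \<and> list_emb (\<le>) r s"
  proof (induction b)
    case Nil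
    then show ?case by simp
  next
    case (Cons c b)
    show ?case
    proof (cases "x \<le> c")
      case True
      with Cons.prems show ?thesis
        by (intro exI[of _ "[c]"] exI[of _ b]) (simp add: leftmost_block_def)
    next
      case False
      with Cons obtain e s where "b = e @ s" "leftmost_block x e" "list_emb (\<le>) r s"
        by auto
      with False show ?thesis
        by (intro exI[of _ "c # e"] exI[of _ s]) (auto simp: leftmost_block_def)
    qed
  qed
next
  assume "\<exists>e s. b = e @ s \<and> leftmost_block x e \<and> list_emb (\<le>) r s"
  then obtain e s where "b = e @ s" "leftmost_block x e" "list_emb (\<le>) r s"
    by blast
  then have "b = butlast e @ last e # s" and "list_emb (\<le>) (x # r) (last e # s)"
    by (auto simp: leftmost_block_def)
  then show "list_emb (\<le>) (x # r) b"
    by blast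
qed

lemma dominating_compositions_conv_list_emb:
  "dominating_compositions n a = {b. is_composition b \<and> sum_list b = n \<and> list_emb (\<le>) a b}"
  by (auto simp: dominating_compositions_def comp_size_def
      intro: list_emb_imp_dominates dominates_imp_list_emb)

lemma is_composition_append [simp]:
  "is_composition (e @ s) \<longleftrightarrow> is_composition e \<and> is_composition s"
  by (auto simp: is_composition_def)

lemma finite_compositions_sum_le: "finite {e. is_composition e \<and> sum_list e \<le> n}"
proof (rule finite_subset)
  have "length e \<le> sum_list e" if "is_composition e" for e :: "nat list"
    using that by (induction e) (auto simp: is_composition_def)
  then show "{e. is_composition e \<and> sum_list e \<le> n} \<subseteq> {e. set e \<subseteq> {..n} \<and> length e \<le> n}"
    by (fastforce dest: member_le_sum_list)
  show "finite {e. set e \<subseteq> {..n} \<and> length e \<le> n}"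
    by (rule finite_lists_length_le) simp
qed

definition leftmost_blocks :: "nat \<Rightarrow> nat \<Rightarrow> nat list set" where
  "leftmost_blocks n x = {e. leftmost_block x e \<and> is_composition e \<and> sum_list e \<le> n}"

lemma finite_leftmost_blocks [simp]: "finite (leftmost_blocks n x)"
  by (rule finite_subset[OF _ finite_compositions_sum_le]) (auto simp: leftmost_blocks_def)

lemma finite_dominating_compositions [simp]: "finite (dominating_compositions n a)"
  by (rule finite_subset[OF _ finite_compositions_sum_le[of n]])
    (auto simp: dominating_compositions_def comp_size_def)

lemma dominating_compositions_Cons:
  "dominating_compositions n (x # r) =
     (\<lambda>(e, s). e @ s) ` (SIGMA e:leftmost_blocks n x. dominating_compositions (n - sum_list e) r)"
  unfolding dominating_compositions_conv_list_emb list_emb_Cons_iff_leftmost_block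
  by (auto simp: leftmost_blocks_def)

lemma card_dominating_compositions_Cons:
  "card (dominating_compositions n (x # r)) =
     (\<Sum>e\<in>leftmost_blocks n x. card (dominating_compositions (n - sum_list e) r))"
proof -
  have "inj_on (\<lambda>(e, s). e @ s)
      (SIGMA e:leftmost_blocks n x. dominating_compositions (n - sum_list e) r)"
    by (auto simp: inj_on_def leftmost_blocks_def dest: leftmost_block_append_unique)
  then show ?thesis
    by (simp add: dominating_compositions_Cons card_image card_SigmaI)
qed

lemma card_dominating_compositions_swap:
  "card (dominating_compositions n (x # y # r)) = card (dominating_compositions n (y # x # r))"
proof -
  define block_pairs where
    "block_pairs x y = (SIGMA e:leftmost_blocks n x. leftmost_blocks (n - sum_list e) y)" for x y
  have card_eq: "card (dominating_compositions n (x # y # r)) =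
      (\<Sum>(e, f)\<in>block_pairs x y. card (dominating_compositions (n - sum_list e - sum_list f) r))"
    for x y
    by (simp add: card_dominating_compositions_Cons block_pairs_def sum.Sigma)
  have "bij_betw prod.swap (block_pairs x y) (block_pairs y x)"
    by (rule bij_betw_byWitness[of _ prod.swap]) (auto simp: block_pairs_def leftmost_blocks_def)
  from sum.reindex_bij_betw[OF this,
      of "\<lambda>(e, f). card (dominating_compositions (n - sum_list e - sum_list f) r)"]
  show ?thesis
    unfolding card_eq by (simp add: case_prod_beta diff_diff_left add.commute)
qed

lemma card_dominating_compositions_Cons_cong:
  assumes "\<And>m. card (dominating_compositions m a) = card (dominating_compositions m a')"
  shows "card (dominating_compositions n (x # a)) = card (dominating_compositions n (x # a'))"
  using assms by (simp add: card_dominating_compositions_Cons)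

lemma card_dominating_compositions_move:
  "card (dominating_compositions n (z # p @ q)) = card (dominating_compositions n (p @ z # q))"
proof (induction p arbitrary: n)
  case Nil
  show ?case by simp
next
  case (Cons w p)
  have "card (dominating_compositions n (z # w # p @ q)) =
      card (dominating_compositions n (w # z # p @ q))"
    by (rule card_dominating_compositions_swap)
  also have "\<dots> = card (dominating_compositions n (w # p @ z # q))"
    using Cons.IH by (rule card_dominating_compositions_Cons_cong)
  finally show ?case by simp
qed

lemma card_dominating_compositions_mset_eq:
  "mset a = mset a' \<Longrightarrow> card (dominating_compositions n a) = card (dominating_compositions n a')"
proof (induction a arbitrary: a' n)
  case Nil
  then show ?case by simp
next
  case (Cons z r)
  then have "z \<in> set a'"
    by (metis list.set_intros(1) set_mset_mset)
  then obtain p q where a': "a' = p @ z # q"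
    by (meson split_list)
  with Cons.prems have "mset r = mset (p @ q)"
    by simp
  then have "card (dominating_compositions n (z # r)) = card (dominating_compositions n (z # p @ q))"
    by (intro card_dominating_compositions_Cons_cong Cons.IH)
  also have "\<dots> = card (dominating_compositions n a')"
    unfolding a' by (rule card_dominating_compositions_move)
  finally show ?case .
qed

theorem lemma2p3:
  fixes a a' :: "nat list" and n :: nat
  assumes "is_composition a" and "is_composition a'"
    and "mset a = mset a'"
  shows "card (dominating_compositions n a) = card (dominating_compositions n a')"
  using assms(3) by (rule card_dominating_compositions_mset_eq)

end
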